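(* In the setting of the context (with $p>L$), for every $t\ge0$ the iterates of Smoothed-GDA satisfy $$d(y^{t+1},z^{t+1})-d(y^t,z^t)\ge\langle\nabla_yK(x(y^t,z^t),z^t;y^t),\,y^{t+1}-y^t\rangle-\frac{L_d}{2}\|y^t-y^{t+1}\|^2+\frac p2(z^{t+1}-z^t)^T\big(z^{t+1}+z^t-2x(y^{t+1},z^{t+1})\big),$$ where $L_d=L+L\sigma_2$, $\sigma_2=\frac{2(p+L)}{p-L}$, and $\nabla_yK(x(y^t,z^t),z^t;y^t)=\nabla_yd(y^t,z^t)$.
   Context: $X\subseteq\mathbb{R}^n$ nonempty closed convex, $Y\subseteq\mathbb{R}^m$ nonempty closed convex compact, $f$ continuously differentiable with $f(x,\cdot)$ concave, $\nabla_xf,\nabla_yf$ $L$-Lipschitz. $K(x,z;y)=f(x,y)+\frac p2\|x-z\|^2$, $x(y,z)=\arg\min_{x\in X}K(x,z;y)$, $d(y,z)=\min_{x\in X}K(x,z;y)$. Smoothed-GDA with $c,\alpha>0$, $0<\beta\le1$: $x^{t+1}=P_X(x^t-c\nabla_xK(x^t,z^t;y^t))$, $y^{t+1}=P_Y(y^t+\alpha\nabla_yK(x^{t+1},z^t;y^t))$, $z^{t+1}=z^t+\beta(x^{t+1}-z^t)$ ($P_S$ Euclidean projection). *)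

theory Defs
  imports "HOL-Analysis.Analysis"
begin

definition Kfun :: "('a::euclidean_space \<Rightarrow> 'b::euclidean_space \<Rightarrow> real) \<Rightarrow> real \<Rightarrow> 'a \<Rightarrow> 'a \<Rightarrow> 'b \<Rightarrow> real"
  where "Kfun f p x z y = f x y + p / 2 * (norm (x - z))\<^sup>2"

text \<open>x(y,z) = argmin over X of K(.,z;y) (unique when p > L).\<close>
definition xopt :: "('a::euclidean_space \<Rightarrow> 'b::euclidean_space \<Rightarrow> real) \<Rightarrow> real \<Rightarrow> 'a set \<Rightarrow> 'b \<Rightarrow> 'a \<Rightarrow> 'a"
  where "xopt f p X y z = (THE x. x \<in> X \<and> (\<forall>x'\<in>X. Kfun f p x z y \<le> Kfun f p x' z y))"

definition dfun :: "('a::euclidean_space \<Rightarrow> 'b::euclidean_space \<Rightarrow> real) \<Rightarrow> real \<Rightarrow> 'a set \<Rightarrow> 'b \<Rightarrow> 'a \<Rightarrow> real"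
  where "dfun f p X y z = Inf ((\<lambda>x. Kfun f p x z y) ` X)"

end

theory Submission imports Defs begin

(* Since grad_x f is L-Lipschitz, K(., z; y) is (p - L)-strongly convex, so x(y, z) is its unique
   minimiser over X and d(y, z) = K(x(y, z), z; y). Adding the variational inequalities of x(y, z)
   and x(y', z) shows that x(., z) is L/(p - L)-Lipschitz. Evaluating K at x(y, z) and at x(y', z)
   and using concavity of f in y sandwiches d(y', z) - d(y, z) between
   <grad_y K(x(y, z), z; y), y' - y> and the same quantity minus L p/(p - L) |y' - y|^2, which
   yields the gradient of d in y and, as L p/(p - L) <= L_d/2, the y-part of the estimate.
   The z-part comes from evaluating K(., z; y) at the minimiser x(y, z'). *)

lemma directional_derivative_lower_bound:
  fixes h :: "'a::real_normed_vector \<Rightarrow> real"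
  assumes deriv: "(h has_derivative h') (at x)"
    and bound: "\<forall>\<^sub>F s in at_right 0. c \<le> (h (x + s *\<^sub>R d) - h x) / s"
  shows "c \<le> h' d"
proof -
  have "((\<lambda>s. x + s *\<^sub>R d) has_derivative (\<lambda>s. s *\<^sub>R d)) (at 0)"
    by (auto intro!: derivative_eq_intros)
  moreover have "(h has_derivative h') (at (x + 0 *\<^sub>R d))"
    using deriv by simp
  ultimately have "((\<lambda>s. h (x + s *\<^sub>R d)) has_real_derivative h' d) (at 0)"
    unfolding has_field_derivative_def
    by (auto dest: has_derivative_compose
        simp: linear.scaleR[OF has_derivative_linear[OF deriv]] mult_commute_abs)
  then have "((\<lambda>s. (h (x + s *\<^sub>R d) - h x) / s) \<longlongrightarrow> h' d) (at_right 0)"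
    unfolding has_field_derivative_iff by (auto intro: tendsto_mono at_le)
  from tendsto_lowerbound[OF this bound] show ?thesis by simp
qed

lemma convex_min_imp_derivative_nonneg:
  fixes h :: "'a::real_normed_vector \<Rightarrow> real"
  assumes "convex S" "x \<in> S" "w \<in> S" "\<And>v. v \<in> S \<Longrightarrow> h x \<le> h v"
    and deriv: "(h has_derivative h') (at x)"
  shows "0 \<le> h' (w - x)"
  using deriv
proof (rule directional_derivative_lower_bound)
  show "\<forall>\<^sub>F s in at_right 0. 0 \<le> (h (x + s *\<^sub>R (w - x)) - h x) / s"
    using eventually_at_right_real[OF zero_less_one]
  proof eventually_elim
    case (elim s)
    have "x + s *\<^sub>R (w - x) = (1 - s) *\<^sub>R x + s *\<^sub>R w" by (simp add: algebra_simps)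
    then have "x + s *\<^sub>R (w - x) \<in> S"
      using convexD_alt[OF assms(1-3)] elim by simp
    with assms(4) elim show ?case by simp
  qed
qed

lemma gradient_lipschitz_lower_bound:
  fixes g :: "'a::real_inner \<Rightarrow> real"
  assumes deriv: "\<And>x. (g has_derivative (\<lambda>v. G x \<bullet> v)) (at x)"
    and lip: "\<And>x x'. norm (G x - G x') \<le> L * norm (x - x')"
  shows "g a + G a \<bullet> d - L / 2 * (norm d)\<^sup>2 \<le> g (a + d)"
proof -
  define \<psi> where "\<psi> s = g (a + s *\<^sub>R d) - s * (G a \<bullet> d) + L / 2 * s\<^sup>2 * (norm d)\<^sup>2" for s
  have "\<psi> 0 \<le> \<psi> 1"
  proof (rule DERIV_nonneg_imp_nondecreasing[where f = \<psi>])
    fix s :: real assume s: "0 \<le> s" "s \<le> 1"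
    have "((\<lambda>s. a + s *\<^sub>R d) has_derivative (\<lambda>s. s *\<^sub>R d)) (at s)"
      by (auto intro!: derivative_eq_intros)
    from has_derivative_compose[OF this deriv]
    have "((\<lambda>s. g (a + s *\<^sub>R d)) has_real_derivative G (a + s *\<^sub>R d) \<bullet> d) (at s)"
      unfolding has_field_derivative_def by (simp add: mult_commute_abs)
    then have "(\<psi> has_real_derivative (G (a + s *\<^sub>R d) - G a) \<bullet> d + L * s * (norm d)\<^sup>2) (at s)"
      unfolding \<psi>_def by (auto intro!: derivative_eq_intros simp: inner_diff_left)
    moreover have "\<bar>(G (a + s *\<^sub>R d) - G a) \<bullet> d\<bar> \<le> L * s * (norm d)\<^sup>2"
    proof -
      have "\<bar>(G (a + s *\<^sub>R d) - G a) \<bullet> d\<bar> \<le> norm (G (a + s *\<^sub>R d) - G a) * norm d"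
        by (rule Cauchy_Schwarz_ineq2)
      also have "\<dots> \<le> L * norm (s *\<^sub>R d) * norm d"
        using lip[of "a + s *\<^sub>R d" a] by (simp add: mult_right_mono)
      finally show ?thesis using s by (simp add: power2_eq_square mult.assoc)
    qed
    ultimately show "\<exists>D. (\<psi> has_real_derivative D) (at s) \<and> 0 \<le> D" by force
  qed simp
  then show ?thesis by (simp add: \<psi>_def)
qed

lemma has_derivative_of_quadratic_remainder:
  fixes g :: "'a::real_normed_vector \<Rightarrow> real"
  assumes "bounded_linear l"
    and remainder: "\<And>y'. \<bar>g y' - g y - l (y' - y)\<bar> \<le> C * (norm (y' - y))\<^sup>2"
  shows "(g has_derivative l) (at y)"
  unfolding has_derivative_at
proof (intro conjI assms(1))
  have "norm (norm (g (y + h) - g y - l h) / norm h) \<le> C * norm h" if "h \<noteq> 0" for h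
  proof -
    have "\<bar>g (y + h) - g y - l h\<bar> \<le> C * norm h * norm h"
      using remainder[of "y + h"] by (simp add: power2_eq_square mult.assoc)
    with that show ?thesis by (simp add: divide_le_eq)
  qed
  then have "\<forall>\<^sub>F h in at 0. norm (norm (g (y + h) - g y - l h) / norm h) \<le> C * norm h"
    by (simp add: eventually_at_filter)
  moreover have "((\<lambda>h. C * norm h) \<longlongrightarrow> 0) (at 0)"
    by (rule tendsto_mult_right_zero[OF tendsto_norm_zero[OF tendsto_ident_at]])
  ultimately show "((\<lambda>h. norm (g (y + h) - g y - l h) / norm h) \<longlongrightarrow> 0) (at 0)"
    by (rule Lim_null_comparison)
qed

lemma strongly_convex_attains_min:
  fixes h :: "'a::euclidean_space \<Rightarrow> real"
  assumes X: "X \<noteq> {}" "closed X"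
    and cont: "continuous_on X h"
    and strong: "\<And>a w. h a + H a \<bullet> (w - a) + \<mu> * (norm (w - a))\<^sup>2 \<le> h w"
    and \<mu>: "0 < \<mu>"
  shows "\<exists>x\<in>X. \<forall>w\<in>X. h x \<le> h w"
proof -
  obtain x0 where x0: "x0 \<in> X" using X by blast
  define R where "R = norm (H x0) / \<mu>"
  define S where "S = X \<inter> cball x0 R"
  have "x0 \<in> S" using x0 \<mu> by (simp add: S_def R_def)
  moreover have "compact S" unfolding S_def using X(2) by (intro closed_Int_compact compact_cball)
  moreover have "continuous_on S h" using cont by (rule continuous_on_subset) (simp add: S_def)
  ultimately obtain x where x: "x \<in> S" "\<And>w. w \<in> S \<Longrightarrow> h x \<le> h w"
    using continuous_attains_inf[of S h] by blast
  have "h x \<le> h w" if w: "w \<in> X" for w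
  proof (cases "w \<in> S")
    case False
    \<comment> \<open>outside S the quadratic lower bound around x0 already exceeds h x0\<close>
    define r where "r = norm (w - x0)"
    have "R < r" using False w by (simp add: S_def r_def dist_norm norm_minus_commute)
    then have "norm (H x0) \<le> \<mu> * r"
      using \<mu> by (simp add: R_def divide_less_eq mult.commute)
    then have "norm (H x0) * r \<le> \<mu> * r\<^sup>2"
      using mult_right_mono[of "norm (H x0)" "\<mu> * r" r]
      by (simp add: r_def power2_eq_square mult.assoc)
    moreover have "- (norm (H x0) * r) \<le> H x0 \<bullet> (w - x0)"
      using Cauchy_Schwarz_ineq2[of "H x0" "w - x0"] by (simp add: r_def)
    ultimately have "h x0 \<le> h w" using strong[of x0 w] by (simp add: r_def)
    then show ?thesis using x(2)[OF \<open>x0 \<in> S\<close>] by linarith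
  qed (use x in blast)
  with x show ?thesis by (auto simp: S_def)
qed

lemma strongly_convex_ex1_min:
  fixes h :: "'a::euclidean_space \<Rightarrow> real"
  assumes X: "X \<noteq> {}" "closed X" "convex X"
    and deriv: "\<And>x. (h has_derivative (\<lambda>v. H x \<bullet> v)) (at x)"
    and strong: "\<And>a w. h a + H a \<bullet> (w - a) + \<mu> * (norm (w - a))\<^sup>2 \<le> h w"
    and \<mu>: "0 < \<mu>"
  shows "\<exists>!x. x \<in> X \<and> (\<forall>w\<in>X. h x \<le> h w)"
proof (rule ex_ex1I)
  have "continuous_on X h"
    using deriv by (meson continuous_at_imp_continuous_on has_derivative_continuous)
  then show "\<exists>x. x \<in> X \<and> (\<forall>w\<in>X. h x \<le> h w)"
    using strongly_convex_attains_min[OF X(1,2) _ strong \<mu>] by blast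
next
  fix x1 x2 assume x1: "x1 \<in> X \<and> (\<forall>w\<in>X. h x1 \<le> h w)" and x2: "x2 \<in> X \<and> (\<forall>w\<in>X. h x2 \<le> h w)"
  have "0 \<le> H x1 \<bullet> (x2 - x1)"
    using convex_min_imp_derivative_nonneg[OF X(3) _ _ _ deriv] x1 x2 by blast
  then have "\<mu> * (norm (x2 - x1))\<^sup>2 \<le> 0"
    using strong[of x1 x2] x1 x2 by fastforce
  then show "x1 = x2" using \<mu> by (simp add: mult_le_0_iff)
qed

lemma inner_sum_proximal_gradients:
  fixes a b x x' z :: "'a::real_inner" and p :: real
  shows "(a + p *\<^sub>R (x - z)) \<bullet> (x' - x) + (b + p *\<^sub>R (x' - z)) \<bullet> (x - x')
    = (a - b) \<bullet> (x' - x) - p * (norm (x - x'))\<^sup>2"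
proof -
  have "(b + p *\<^sub>R (x' - z)) \<bullet> (x - x') = - ((b + p *\<^sub>R (x' - z)) \<bullet> (x' - x))"
    by (simp flip: inner_minus_right)
  then have "(a + p *\<^sub>R (x - z)) \<bullet> (x' - x) + (b + p *\<^sub>R (x' - z)) \<bullet> (x - x')
      = (a + p *\<^sub>R (x - z) - (b + p *\<^sub>R (x' - z))) \<bullet> (x' - x)"
    by (simp only: inner_diff_left)
  also have "a + p *\<^sub>R (x - z) - (b + p *\<^sub>R (x' - z)) = (a - b) - p *\<^sub>R (x' - x)"
    by (simp add: algebra_simps)
  also have "((a - b) - p *\<^sub>R (x' - x)) \<bullet> (x' - x) = (a - b) \<bullet> (x' - x) - p * (norm (x' - x))\<^sup>2"
    by (simp add: inner_diff_left power2_norm_eq_inner)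
  finally show ?thesis by (simp add: norm_minus_commute)
qed

lemma norm_Pair_diff_le: "norm ((x, y) - (x', y')) \<le> norm (x - x') + norm (y - y')"
  using norm_Pair_le[of "x - x'" "y - y'"] by simp

locale proximal_minimax =
  fixes f :: "'a::euclidean_space \<Rightarrow> 'b::euclidean_space \<Rightarrow> real"
    and gx :: "'a \<Rightarrow> 'b \<Rightarrow> 'a" and gy :: "'a \<Rightarrow> 'b \<Rightarrow> 'b"
    and X :: "'a set" and L p :: real
  assumes grad: "\<And>x y. ((\<lambda>(u, v). f u v) has_derivative
      (\<lambda>(u, v). gx x y \<bullet> u + gy x y \<bullet> v)) (at (x, y))"
    and conc: "\<And>x. concave_on UNIV (f x)"
    and Lip_x: "\<And>x y x' y'. norm (gx x y - gx x' y') \<le> L * norm ((x, y) - (x', y'))"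
    and Lip_y: "\<And>x y x' y'. norm (gy x y - gy x' y') \<le> L * norm ((x, y) - (x', y'))"
    and pL: "L < p"
    and X: "X \<noteq> {}" "closed X" "convex X"
begin

lemma L_nonneg: "0 \<le> L"
proof -
  obtain e :: 'a where "e \<in> Basis" using nonempty_Basis by blast
  then have "0 < norm ((e, 0::'b) - (0, 0))" by (simp add: nonzero_Basis)
  moreover have "0 \<le> L * norm ((e, 0::'b) - (0, 0))"
    using Lip_x[of e 0 0 0] norm_ge_zero order_trans by blast
  ultimately show ?thesis by (simp add: zero_le_mult_iff)
qed

lemma gx_lipschitz: "norm (gx x y - gx x' y') \<le> L * (norm (x - x') + norm (y - y'))"
  using Lip_x[of x y x' y'] mult_left_mono[OF norm_Pair_diff_le L_nonneg] by (rule order_trans)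

lemma gy_lipschitz: "norm (gy x y - gy x' y') \<le> L * (norm (x - x') + norm (y - y'))"
  using Lip_y[of x y x' y'] mult_left_mono[OF norm_Pair_diff_le L_nonneg] by (rule order_trans)

lemma has_derivative_f_x: "((\<lambda>x. f x y) has_derivative (\<lambda>v. gx x y \<bullet> v)) (at x)"
proof -
  have "((\<lambda>x. (x, y)) has_derivative (\<lambda>v. (v, 0))) (at x)" by (auto intro!: derivative_eq_intros)
  from has_derivative_compose[OF this grad] show ?thesis by simp
qed

lemma has_derivative_f_y: "((\<lambda>y. f x y) has_derivative (\<lambda>v. gy x y \<bullet> v)) (at y)"
proof -
  have "((\<lambda>y. (x, y)) has_derivative (\<lambda>v. (0, v))) (at y)" by (auto intro!: derivative_eq_intros)
  from has_derivative_compose[OF this grad] show ?thesis by simp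
qed

lemma f_le_linearization_y: "f x b \<le> f x a + gy x a \<bullet> (b - a)"
proof -
  have "f x b - f x a \<le> gy x a \<bullet> (b - a)"
  proof (rule directional_derivative_lower_bound[OF has_derivative_f_y])
    show "\<forall>\<^sub>F s in at_right 0. f x b - f x a \<le> (f x (a + s *\<^sub>R (b - a)) - f x a) / s"
      using eventually_at_right_real[OF zero_less_one]
    proof eventually_elim
      case (elim s)
      have "a + s *\<^sub>R (b - a) = (1 - s) *\<^sub>R a + s *\<^sub>R b" by (simp add: algebra_simps)
      then have "(1 - s) * f x a + s * f x b \<le> f x (a + s *\<^sub>R (b - a))"
        using concave_onD[OF conc, of s a b] elim by simp
      then have "s * (f x b - f x a) \<le> f x (a + s *\<^sub>R (b - a)) - f x a"
        by (simp add: algebra_simps)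
      with elim show ?case by (simp add: pos_le_divide_eq mult.commute)
    qed
  qed
  then show ?thesis by simp
qed

lemma Kfun_has_derivative_x:
  "((\<lambda>x. Kfun f p x z y) has_derivative (\<lambda>v. (gx x y + p *\<^sub>R (x - z)) \<bullet> v)) (at x)"
  unfolding Kfun_def power2_norm_eq_inner
  by (auto intro!: derivative_eq_intros has_derivative_f_x
      simp: inner_add_left inner_commute algebra_simps)

lemma Kfun_strongly_convex:
  "Kfun f p a z y + (gx a y + p *\<^sub>R (a - z)) \<bullet> (w - a) + (p - L) / 2 * (norm (w - a))\<^sup>2
    \<le> Kfun f p w z y"
proof -
  have descent: "f a y + gx a y \<bullet> (w - a) - L / 2 * (norm (w - a))\<^sup>2 \<le> f w y"
    using gradient_lipschitz_lower_bound[of "\<lambda>x. f x y" "\<lambda>x. gx x y" L a "w - a"]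
      has_derivative_f_x gx_lipschitz[of _ y _ y] by simp
  have inner_split:
    "(gx a y + p *\<^sub>R (a - z)) \<bullet> (w - a) = gx a y \<bullet> (w - a) + p * ((a - z) \<bullet> (w - a))"
    by (simp add: inner_add_left)
  have square_split:
    "(norm (w - z))\<^sup>2 = (norm (a - z))\<^sup>2 + 2 * ((a - z) \<bullet> (w - a)) + (norm (w - a))\<^sup>2"
    using dot_norm[of "a - z" "w - a"] by (simp add: field_simps)
  show ?thesis
    unfolding Kfun_def inner_split square_split using descent
    by (simp add: algebra_simps diff_divide_distrib)
qed

lemma Kfun_ex1_min: "\<exists>!x. x \<in> X \<and> (\<forall>w\<in>X. Kfun f p x z y \<le> Kfun f p w z y)"
  using strongly_convex_ex1_min[where h = "\<lambda>x. Kfun f p x z y"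
      and H = "\<lambda>x. gx x y + p *\<^sub>R (x - z)" and \<mu> = "(p - L) / 2", OF X
      Kfun_has_derivative_x Kfun_strongly_convex] pL
  by simp

lemma xopt_mem: "xopt f p X y z \<in> X"
  and xopt_le: "w \<in> X \<Longrightarrow> Kfun f p (xopt f p X y z) z y \<le> Kfun f p w z y"
  using theI'[OF Kfun_ex1_min] unfolding xopt_def by blast+

lemma dfun_eq_Kfun_xopt: "dfun f p X y z = Kfun f p (xopt f p X y z) z y"
  unfolding dfun_def by (intro cInf_eq_minimum imageI xopt_mem) (auto intro: xopt_le)

lemma dfun_le_Kfun: "w \<in> X \<Longrightarrow> dfun f p X y z \<le> Kfun f p w z y"
  unfolding dfun_eq_Kfun_xopt by (rule xopt_le)

lemma xopt_variational_ineq: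
  "w \<in> X \<Longrightarrow> 0 \<le> (gx (xopt f p X y z) y + p *\<^sub>R (xopt f p X y z - z)) \<bullet> (w - xopt f p X y z)"
  by (rule convex_min_imp_derivative_nonneg[OF X(3) xopt_mem _ xopt_le Kfun_has_derivative_x])

lemma xopt_lipschitz_y: "norm (xopt f p X y z - xopt f p X y' z) \<le> L / (p - L) * norm (y - y')"
proof -
  define x x' where "x = xopt f p X y z" and "x' = xopt f p X y' z"
  define n m where "n = norm (x - x')" and "m = norm (y - y')"
  have "0 \<le> (gx x y + p *\<^sub>R (x - z)) \<bullet> (x' - x) + (gx x' y' + p *\<^sub>R (x' - z)) \<bullet> (x - x')"
    using xopt_variational_ineq[where y = y and z = z, OF xopt_mem[where y = y' and z = z]]
      xopt_variational_ineq[where y = y' and z = z, OF xopt_mem[where y = y and z = z]]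
    unfolding x_def x'_def by linarith
  also have "\<dots> = (gx x y - gx x' y') \<bullet> (x' - x) - p * n\<^sup>2"
    unfolding n_def by (rule inner_sum_proximal_gradients)
  also have "\<dots> \<le> L * (n + m) * n - p * n\<^sup>2"
  proof -
    have "(gx x y - gx x' y') \<bullet> (x' - x) \<le> norm (gx x y - gx x' y') * n"
      using norm_cauchy_schwarz[of "gx x y - gx x' y'" "x' - x"]
      by (simp add: n_def norm_minus_commute)
    also have "\<dots> \<le> L * (n + m) * n"
      using gx_lipschitz by (simp add: n_def m_def mult_right_mono)
    finally show ?thesis by simp
  qed
  finally have "(p - L) * n * n \<le> L * m * n" by (simp add: power2_eq_square algebra_simps)
  then have "(p - L) * n \<le> L * m"
    using L_nonneg by (cases "n = 0") (auto simp: m_def n_def intro: mult_right_le_imp_le)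
  then show ?thesis
    using pL by (simp add: x_def x'_def n_def m_def pos_le_divide_eq mult.commute)
qed

lemma dfun_le_linearization_y:
  "dfun f p X y' z \<le> dfun f p X y z + gy (xopt f p X y z) y \<bullet> (y' - y)"
  using dfun_le_Kfun[where w = "xopt f p X y z" and y = y' and z = z, OF xopt_mem]
    dfun_eq_Kfun_xopt[of y z]
    f_le_linearization_y[of "xopt f p X y z" y' y]
  by (simp add: Kfun_def)

lemma linearization_y_le_dfun:
  "dfun f p X y z + gy (xopt f p X y z) y \<bullet> (y' - y) - L * p / (p - L) * (norm (y' - y))\<^sup>2
    \<le> dfun f p X y' z"
proof -
  define x x' m where "x = xopt f p X y z" and "x' = xopt f p X y' z" and "m = norm (y' - y)"
  have "dfun f p X y z + gy x' y' \<bullet> (y' - y) \<le> dfun f p X y' z"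
    using dfun_le_Kfun[where w = x' and y = y and z = z, unfolded x'_def, OF xopt_mem]
      dfun_eq_Kfun_xopt[of y' z]
      f_le_linearization_y[of x' y y']
    by (simp add: Kfun_def x'_def inner_diff_right)
  moreover have "- (L * p / (p - L) * m\<^sup>2) \<le> (gy x' y' - gy x y) \<bullet> (y' - y)"
  proof -
    have "\<bar>(gy x' y' - gy x y) \<bullet> (y' - y)\<bar> \<le> norm (gy x' y' - gy x y) * m"
      unfolding m_def by (rule Cauchy_Schwarz_ineq2)
    also have "\<dots> \<le> L * (norm (x' - x) + m) * m"
      using gy_lipschitz by (simp add: m_def mult_right_mono)
    also have "\<dots> \<le> L * (L / (p - L) * m + m) * m"
      using xopt_lipschitz_y[of y' z y] L_nonneg
      by (intro mult_right_mono mult_left_mono add_right_mono) (auto simp: m_def x_def x'_def)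
    also have "\<dots> = L * p / (p - L) * m\<^sup>2"
      using pL by (simp add: field_simps power2_eq_square)
    finally show ?thesis by linarith
  qed
  ultimately show ?thesis by (simp add: inner_diff_left x_def m_def)
qed

lemma dfun_has_derivative_y:
  "((\<lambda>y. dfun f p X y z) has_derivative (\<lambda>v. gy (xopt f p X y z) y \<bullet> v)) (at y)"
proof (rule has_derivative_of_quadratic_remainder[OF bounded_linear_inner_right])
  fix y'
  have "0 \<le> L * p / (p - L)" using L_nonneg pL by simp
  then show "\<bar>dfun f p X y' z - dfun f p X y z - gy (xopt f p X y z) y \<bullet> (y' - y)\<bar>
      \<le> L * p / (p - L) * (norm (y' - y))\<^sup>2"
    using dfun_le_linearization_y[where y = y and y' = y' and z = z]
      linearization_y_le_dfun[where y = y and y' = y' and z = z]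
    by (simp add: abs_le_iff)
qed

lemma dfun_change_z:
  "dfun f p X y z + p / 2 * ((z' - z) \<bullet> (z' + z - 2 *\<^sub>R xopt f p X y z')) \<le> dfun f p X y z'"
proof -
  define x where "x = xopt f p X y z'"
  have "(z' - z) \<bullet> (z' + z - 2 *\<^sub>R x) = (norm (x - z'))\<^sup>2 - (norm (x - z))\<^sup>2"
    by (simp add: power2_norm_eq_inner inner_diff_left inner_diff_right inner_add_right
        inner_commute algebra_simps)
  then have "p / 2 * ((z' - z) \<bullet> (z' + z - 2 *\<^sub>R x))
      = p / 2 * (norm (x - z'))\<^sup>2 - p / 2 * (norm (x - z))\<^sup>2"
    by (simp only: right_diff_distrib)
  moreover have "dfun f p X y z \<le> f x y + p / 2 * (norm (x - z))\<^sup>2"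
    using dfun_le_Kfun[where w = x and y = y and z = z, unfolded x_def, OF xopt_mem]
    by (simp add: Kfun_def x_def)
  moreover have "dfun f p X y z' = f x y + p / 2 * (norm (x - z'))\<^sup>2"
    by (simp add: dfun_eq_Kfun_xopt Kfun_def x_def)
  ultimately show ?thesis unfolding x_def[symmetric] by linarith
qed

end

lemma smoothness_constant_le:
  fixes L p :: real
  assumes "0 \<le> L" "L < p"
  shows "L * p / (p - L) \<le> (L + L * (2 * (p + L) / (p - L))) / 2"
proof -
  define d where "d = p - L"
  then have d: "p = L + d" "0 < d" using assms by auto
  have "(L + L * (2 * (p + L) / (p - L))) / 2 = L * p / (p - L) + L * (p + L) / (2 * (p - L))"
    using d by (simp add: field_simps)
  moreover have "0 \<le> L * (p + L) / (2 * (p - L))" using assms by simp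
  ultimately show ?thesis by linarith
qed

theorem lemma7:
  fixes f :: "'a::euclidean_space \<Rightarrow> 'b::euclidean_space \<Rightarrow> real"
    and gx :: "'a \<Rightarrow> 'b \<Rightarrow> 'a" and gy :: "'a \<Rightarrow> 'b \<Rightarrow> 'b"
    and X :: "'a set" and Y :: "'b set"
    and L p c \<alpha> \<beta> :: real
    and xs zs :: "nat \<Rightarrow> 'a" and ys :: "nat \<Rightarrow> 'b"
    and t :: nat
  assumes X: "X \<noteq> {}" "closed X" "convex X"
    and Y: "Y \<noteq> {}" "closed Y" "convex Y" "compact Y"
    and grad: "\<And>x y. ((\<lambda>(u, v). f u v) has_derivative (\<lambda>(u, v). gx x y \<bullet> u + gy x y \<bullet> v)) (at (x, y))"
    and cont_gx: "continuous_on UNIV (\<lambda>(x, y). gx x y)"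
    and cont_gy: "continuous_on UNIV (\<lambda>(x, y). gy x y)"
    and conc: "\<And>x. concave_on UNIV (f x)"
    and Lip_x: "\<And>x y x' y'. norm (gx x y - gx x' y') \<le> L * norm ((x, y) - (x', y'))"
    and Lip_y: "\<And>x y x' y'. norm (gy x y - gy x' y') \<le> L * norm ((x, y) - (x', y'))"
    and pL: "p > L"
    and c: "c > 0" and \<alpha>: "\<alpha> > 0" and \<beta>: "0 < \<beta>" "\<beta> \<le> 1"
    and init: "xs 0 \<in> X" "ys 0 \<in> Y"
    and upd_x: "\<And>s. xs (Suc s) = closest_point X (xs s - c *\<^sub>R (gx (xs s) (ys s) + p *\<^sub>R (xs s - zs s)))"
    and upd_y: "\<And>s. ys (Suc s) = closest_point Y (ys s + \<alpha> *\<^sub>R gy (xs (Suc s)) (ys s))"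
    and upd_z: "\<And>s. zs (Suc s) = zs s + \<beta> *\<^sub>R (xs (Suc s) - zs s)"
  shows "(dfun f p X (ys (Suc t)) (zs (Suc t)) - dfun f p X (ys t) (zs t)
      \<ge> gy (xopt f p X (ys t) (zs t)) (ys t) \<bullet> (ys (Suc t) - ys t)
         - (L + L * (2 * (p + L) / (p - L))) / 2 * (norm (ys t - ys (Suc t)))\<^sup>2
         + p / 2 * ((zs (Suc t) - zs t) \<bullet> (zs (Suc t) + zs t - 2 *\<^sub>R xopt f p X (ys (Suc t)) (zs (Suc t))))) \<and>
      ((\<lambda>y. dfun f p X y (zs t)) has_derivative (\<lambda>v. gy (xopt f p X (ys t) (zs t)) (ys t) \<bullet> v)) (at (ys t))"
proof -
  \<comment> \<open>the estimate holds for arbitrary points\<close>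
  interpret proximal_minimax f gx gy X L p
    using grad conc Lip_x Lip_y pL X by unfold_locales
  have "L * p / (p - L) * (norm (ys (Suc t) - ys t))\<^sup>2
      \<le> (L + L * (2 * (p + L) / (p - L))) / 2 * (norm (ys t - ys (Suc t)))\<^sup>2"
    using mult_right_mono[OF smoothness_constant_le[OF L_nonneg pL]] by (simp add: norm_minus_commute)
  moreover note linearization_y_le_dfun[where y = "ys t" and y' = "ys (Suc t)" and z = "zs t"]
    and dfun_change_z[where y = "ys (Suc t)" and z = "zs t" and z' = "zs (Suc t)"]
  ultimately show ?thesis
    by (intro conjI dfun_has_derivative_y) linarith
qed

end
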